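(* For any sequence of instances $\{\mathcal{I}_N\}$ of the non-binary voting game there exists a sequence of regular strategy profiles $\{\Sigma'_N\}_{N\ge1}$ ($\Sigma'_N$ a profile in $\mathcal{I}_N$) such that $\lim_{N\to\infty}A(\Sigma'_N)=1$.
   Context: Non-binary voting game. $N$ agents each vote for $\mathbf{A}$ or $\mathbf{R}$. World state $W\in\{1,\dots,\mathcal{W}\}$ (unobserved), prior $P_w>0$. Conditional on $W$, each agent independently receives a signal $S_n\in\{1,\dots,M\}$ with $P_{mw}=\Pr[S_n=m\mid W=w]$; stochastic dominance: for $w_1>w_2$ and $m\in\{2,\dots,M\}$, $\Pr[S_n\ge m\mid W=w_1]>\Pr[S_n\ge m\mid W=w_2]$. Threshold $\mu\in(0,1)$: $\mathbf{A}$ wins iff at least $\mu N$ agents vote $\mathbf{A}$, else $\mathbf{R}$. Agent $n$ has utility $v_n:\{1,\dots,\mathcal{W}\}\times\{\mathbf{A},\mathbf{R}\}\to\{0,\dots,B\}$ with $v_n(w,\mathbf{A})$ strictly increasing, $v_n(w,\mathbf{R})$ strictly decreasing in $w$, and $v_n(w,\mathbf{A})\ne v_n(w,\mathbf{R})$. Constants $\alpha^{\mathbf{A}}_w,\alpha^{\mathbf{R}}_w=1-\alpha^{\mathbf{A}}_w$ independent of $N$: exactly $\lfloor\alpha^{\mathbf{R}}_wN\rfloor$ agents prefer $\mathbf{R}$ in state $w$; $\alpha^{\mathbf{A}}_w\ne\mu$ and rounding does not flip the comparison with $\mu$. Informed majority decision in state $w$: $\mathbf{A}$ if $\alpha^{\mathbf{A}}_w>\mu$,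 else $\mathbf{R}$. $\mathcal{L}=\{w:\alpha^{\mathbf{A}}_w<\mu\}$, $\mathcal{H}=\{w:\alpha^{\mathbf{A}}_w>\mu\}$, both nonempty. For agent $n$, $\mathcal{L}_n=\{w:v_n(w,\mathbf{R})>v_n(w,\mathbf{A})\}$, $\mathcal{H}_n=\{w:v_n(w,\mathbf{A})>v_n(w,\mathbf{R})\}$; $n$ is friendly if $\mathcal{L}\cap\mathcal{H}_n\ne\emptyset$, unfriendly if $\mathcal{H}\cap\mathcal{L}_n\ne\emptyset$, contingent if $\mathcal{L}_n=\mathcal{L}$. A sequence of instances: $\mathcal{I}_N$ has $N$ agents, all sharing $\mu$, $(P_w)$, $(P_{mw})$, $(\alpha^{\mathbf{A}}_w,\alpha^{\mathbf{R}}_w)$; utilities arbitrary. Strategy $\sigma=(\beta_1,\dots,\beta_M)$, $\beta_m$ = probability of voting $\mathbf{A}$ on signal $m$. Regular profile: friendly agents always vote $\mathbf{A}$, unfriendly agents always vote $\mathbf{R}$. Fidelity $A(\Sigma)=\sum_{w\in\mathcal{L}}P_w\lambda^{\mathbf{R}}_w(\Sigma)+\sum_{w\in\mathcal{H}}P_w\lambda^{\mathbf{A}}_w(\Sigma)$, with $\lambda^{\mathbf{X}}_w(\Sigma)$ the ex-ante probability that $\mathbf{X}$ wins in state $w$. *)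

theory Defs
  imports Complex_Main
begin

text \<open>Non-binary voting game. States are 1..W, signals 1..M, agents of instance N are 1..N.
  Outcomes: Acc (= A) and Rej (= R).\<close>

datatype outcome = Acc | Rej

text \<open>A strategy is a function from signals to the probability of voting A.\<close>
definition is_strategy :: "nat \<Rightarrow> (nat \<Rightarrow> real) \<Rightarrow> bool" where
  "is_strategy M \<beta> \<longleftrightarrow> (\<forall>m\<in>{1..M}. 0 \<le> \<beta> m \<and> \<beta> m \<le> 1)"

definition vote_A_prob :: "(nat \<Rightarrow> nat \<Rightarrow> real) \<Rightarrow> nat \<Rightarrow> (nat \<Rightarrow> real) \<Rightarrow> nat \<Rightarrow> real" where
  "vote_A_prob Pm M \<beta> w = (\<Sum>m\<in>{1..M}. Pm m w * \<beta> m)"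

text \<open>Ex-ante probability that A wins in state w under profile Sigma (agents 1..N vote
  independently given the state): the set S of A-voters has at least mu*N elements.\<close>
definition lambda_A :: "(nat \<Rightarrow> nat \<Rightarrow> real) \<Rightarrow> nat \<Rightarrow> real \<Rightarrow> nat \<Rightarrow> (nat \<Rightarrow> nat \<Rightarrow> real) \<Rightarrow> nat \<Rightarrow> real" where
  "lambda_A Pm M \<mu> N \<Sigma> w =
     (\<Sum>S\<in>{S. S \<subseteq> {1..N} \<and> \<mu> * real N \<le> real (card S)}.
        (\<Prod>n\<in>S. vote_A_prob Pm M (\<Sigma> n) w) *
        (\<Prod>n\<in>{1..N} - S. 1 - vote_A_prob Pm M (\<Sigma> n) w))"

definition lambda_R :: "(nat \<Rightarrow> nat \<Rightarrow> real) \<Rightarrow> nat \<Rightarrow> real \<Rightarrow> nat \<Rightarrow> (nat \<Rightarrow> nat \<Rightarrow> real) \<Rightarrow> nat \<Rightarrow> real" where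
  "lambda_R Pm M \<mu> N \<Sigma> w = 1 - lambda_A Pm M \<mu> N \<Sigma> w"

definition low_states :: "nat \<Rightarrow> real \<Rightarrow> (nat \<Rightarrow> real) \<Rightarrow> nat set" where
  "low_states W \<mu> \<alpha>A = {w\<in>{1..W}. \<alpha>A w < \<mu>}"

definition high_states :: "nat \<Rightarrow> real \<Rightarrow> (nat \<Rightarrow> real) \<Rightarrow> nat set" where
  "high_states W \<mu> \<alpha>A = {w\<in>{1..W}. \<alpha>A w > \<mu>}"

definition fidelity ::
  "nat \<Rightarrow> (nat \<Rightarrow> real) \<Rightarrow> (nat \<Rightarrow> nat \<Rightarrow> real) \<Rightarrow> nat \<Rightarrow> real \<Rightarrow> (nat \<Rightarrow> real)
   \<Rightarrow> nat \<Rightarrow> (nat \<Rightarrow> nat \<Rightarrow> real) \<Rightarrow> real" where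
  "fidelity W P Pm M \<mu> \<alpha>A N \<Sigma> =
     (\<Sum>w\<in>low_states W \<mu> \<alpha>A. P w * lambda_R Pm M \<mu> N \<Sigma> w) +
     (\<Sum>w\<in>high_states W \<mu> \<alpha>A. P w * lambda_A Pm M \<mu> N \<Sigma> w)"

definition friendly :: "nat \<Rightarrow> real \<Rightarrow> (nat \<Rightarrow> real) \<Rightarrow> (nat \<Rightarrow> nat \<Rightarrow> outcome \<Rightarrow> nat) \<Rightarrow> nat \<Rightarrow> bool" where
  "friendly W \<mu> \<alpha>A v n \<longleftrightarrow> (\<exists>w\<in>low_states W \<mu> \<alpha>A. v n w Acc > v n w Rej)"

definition unfriendly :: "nat \<Rightarrow> real \<Rightarrow> (nat \<Rightarrow> real) \<Rightarrow> (nat \<Rightarrow> nat \<Rightarrow> outcome \<Rightarrow> nat) \<Rightarrow> nat \<Rightarrow> bool" where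
  "unfriendly W \<mu> \<alpha>A v n \<longleftrightarrow> (\<exists>w\<in>high_states W \<mu> \<alpha>A. v n w Rej > v n w Acc)"

definition regular_profile ::
  "nat \<Rightarrow> nat \<Rightarrow> real \<Rightarrow> (nat \<Rightarrow> real) \<Rightarrow> nat \<Rightarrow> (nat \<Rightarrow> nat \<Rightarrow> outcome \<Rightarrow> nat)
   \<Rightarrow> (nat \<Rightarrow> nat \<Rightarrow> real) \<Rightarrow> bool" where
  "regular_profile W M \<mu> \<alpha>A N v \<Sigma> \<longleftrightarrow>
     (\<forall>n\<in>{1..N}. is_strategy M (\<Sigma> n)) \<and>
     (\<forall>n\<in>{1..N}. friendly W \<mu> \<alpha>A v n \<longrightarrow> (\<forall>m\<in>{1..M}. \<Sigma> n m = 1)) \<and>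
     (\<forall>n\<in>{1..N}. unfriendly W \<mu> \<alpha>A v n \<longrightarrow> (\<forall>m\<in>{1..M}. \<Sigma> n m = 0))"

end

theory Submission
  imports Defs
begin

text \<open>
  Preferences are monotone in the state, so the low states form an initial segment ending at
  some state \<open>wL\<close>, the high states a final segment starting at some \<open>wH > wL\<close>, and the friendly
  (unfriendly) agents are exactly those preferring A at \<open>wL\<close> (R at \<open>wH\<close>). Hence about \<open>a N\<close>
  agents are friendly and about \<open>(b - a) N\<close> contingent, where \<open>a = \<alpha>A wL < \<mu> < b = \<alpha>A wH\<close>.
  Let contingent agents vote A with probability \<open>x\<close> on the lowest signal and \<open>x + y\<close> on all
  others. By stochastic dominance their A-probability \<open>q w\<close> increases with \<open>w\<close>, and \<open>x, y\<close> can
  be chosen so that \<open>a + (b - a) q w\<close> exceeds \<open>\<mu>\<close> by a fixed margin in high states and falls short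
  of it by that margin in low states. The number of A votes is a Poisson binomial variable with
  variance at most \<open>N\<close> whose mean is thus a linear distance away from \<open>\<mu> N\<close>, so by Chebyshev's
  inequality the informed decision wins with probability \<open>1 - O(1/N)\<close> in every state.
\<close>

section \<open>Poisson binomial distribution\<close>

definition pbin_weight :: "('a \<Rightarrow> real) \<Rightarrow> 'a set \<Rightarrow> 'a set \<Rightarrow> real" where
  "pbin_weight p I S = (\<Prod>i\<in>S. p i) * (\<Prod>i\<in>I - S. 1 - p i)"

lemma pbin_weight_nonneg:
  assumes "\<forall>i\<in>I. 0 \<le> p i \<and> p i \<le> 1" "S \<subseteq> I"
  shows "0 \<le> pbin_weight p I S"
  using assms unfolding pbin_weight_def by (intro mult_nonneg_nonneg prod_nonneg) auto

lemma sum_pbin_weight_insert: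
  fixes g :: "nat \<Rightarrow> real"
  assumes "finite I" "x \<notin> I"
  shows "(\<Sum>S\<in>Pow (insert x I). pbin_weight p (insert x I) S * g (card S)) =
         (\<Sum>S\<in>Pow I. pbin_weight p I S * (p x * g (Suc (card S)) + (1 - p x) * g (card S)))"
proof -
  have weight_out: "pbin_weight p (insert x I) S = (1 - p x) * pbin_weight p I S"
    if "S \<subseteq> I" for S
  proof -
    have "insert x I - S = insert x (I - S)" using assms that by auto
    then show ?thesis using assms unfolding pbin_weight_def by (simp add: algebra_simps)
  qed
  have weight_in: "pbin_weight p (insert x I) (insert x S) = p x * pbin_weight p I S"
    if "S \<subseteq> I" for S
  proof -
    have "insert x I - insert x S = I - S" "finite S" "x \<notin> S"
      using assms that finite_subset by auto
    then show ?thesis unfolding pbin_weight_def by (simp add: algebra_simps)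
  qed
  have inj: "inj_on (insert x) (Pow I)"
    using assms by (intro inj_onI) (metis PowD in_mono insert_ident)
  have "(\<Sum>S\<in>Pow (insert x I). pbin_weight p (insert x I) S * g (card S)) =
        (\<Sum>S\<in>Pow I. pbin_weight p (insert x I) S * g (card S)) +
        (\<Sum>S\<in>insert x ` Pow I. pbin_weight p (insert x I) S * g (card S))"
    unfolding Pow_insert using assms by (intro sum.union_disjoint) auto
  also have "(\<Sum>S\<in>insert x ` Pow I. pbin_weight p (insert x I) S * g (card S)) =
             (\<Sum>S\<in>Pow I. pbin_weight p I S * (p x * g (Suc (card S))))"
  proof -
    have "card (insert x S) = Suc (card S)" if "S \<subseteq> I" for S
      using assms that finite_subset by (subst card_insert_disjoint) auto
    then show ?thesis by (auto simp: sum.reindex[OF inj] weight_in intro!: sum.cong)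
  qed
  also have "(\<Sum>S\<in>Pow I. pbin_weight p (insert x I) S * g (card S)) =
             (\<Sum>S\<in>Pow I. pbin_weight p I S * ((1 - p x) * g (card S)))"
    by (auto simp: weight_out intro!: sum.cong)
  finally show ?thesis by (simp add: sum.distrib[symmetric] algebra_simps)
qed

lemma sum_pbin_weight: "finite I \<Longrightarrow> (\<Sum>S\<in>Pow I. pbin_weight p I S) = 1"
proof (induction I rule: finite_induct)
  case empty
  then show ?case by (simp add: pbin_weight_def)
next
  case (insert x I)
  then show ?case
    using sum_pbin_weight_insert[OF insert(1,2), of p "\<lambda>_. 1"] by simp
qed

lemma pbin_mean: "finite I \<Longrightarrow> (\<Sum>S\<in>Pow I. pbin_weight p I S * card S) = sum p I"
proof (induction I rule: finite_induct)
  case empty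
  then show ?case by (simp add: pbin_weight_def)
next
  case (insert x I)
  have "(\<Sum>S\<in>Pow (insert x I). pbin_weight p (insert x I) S * card S) =
        (\<Sum>S\<in>Pow I. pbin_weight p I S * card S) + p x * (\<Sum>S\<in>Pow I. pbin_weight p I S)"
    using sum_pbin_weight_insert[OF insert(1,2), of p real]
    by (simp add: algebra_simps sum.distrib sum_distrib_left)
  then show ?case using insert sum_pbin_weight[OF insert(1)] by simp
qed

lemma pbin_second_moment:
  "finite I \<Longrightarrow> (\<Sum>S\<in>Pow I. pbin_weight p I S * (real (card S))\<^sup>2) =
     (sum p I)\<^sup>2 + (\<Sum>i\<in>I. p i * (1 - p i))"
proof (induction I rule: finite_induct)
  case empty
  then show ?case by (simp add: pbin_weight_def)
next
  case (insert x I)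
  have "(\<Sum>S\<in>Pow (insert x I). pbin_weight p (insert x I) S * (real (card S))\<^sup>2) =
        (\<Sum>S\<in>Pow I. pbin_weight p I S * (real (card S))\<^sup>2) +
        2 * p x * (\<Sum>S\<in>Pow I. pbin_weight p I S * card S) + p x * (\<Sum>S\<in>Pow I. pbin_weight p I S)"
    using sum_pbin_weight_insert[OF insert(1,2), of p "\<lambda>k. (real k)\<^sup>2"]
    by (simp add: algebra_simps sum.distrib sum_distrib_left power2_eq_square)
  then show ?case
    using insert sum_pbin_weight[OF insert(1)] pbin_mean[OF insert(1)]
    by (simp add: power2_eq_square algebra_simps)
qed

lemma pbin_variance:
  fixes p :: "'a \<Rightarrow> real"
  assumes "finite I"
  shows "(\<Sum>S\<in>Pow I. pbin_weight p I S * (card S - sum p I)\<^sup>2) = (\<Sum>i\<in>I. p i * (1 - p i))"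
proof -
  have "(\<Sum>S\<in>Pow I. pbin_weight p I S * (card S - sum p I)\<^sup>2) =
        (\<Sum>S\<in>Pow I. pbin_weight p I S * (real (card S))\<^sup>2)
        - 2 * sum p I * (\<Sum>S\<in>Pow I. pbin_weight p I S * card S)
        + (sum p I)\<^sup>2 * (\<Sum>S\<in>Pow I. pbin_weight p I S)"
    by (simp add: power2_diff algebra_simps sum.distrib sum_subtractf sum_distrib_left
        sum_distrib_right)
  then show ?thesis
    using sum_pbin_weight[OF assms] pbin_mean[OF assms] pbin_second_moment[OF assms]
    by (simp add: power2_eq_square)
qed

lemma pbin_chebyshev:
  fixes p :: "'a \<Rightarrow> real"
  assumes "finite I" and p: "\<forall>i\<in>I. 0 \<le> p i \<and> p i \<le> 1" and "T \<subseteq> Pow I" "0 < t"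
    and far: "\<forall>S\<in>T. t \<le> \<bar>card S - sum p I\<bar>"
  shows "(\<Sum>S\<in>T. pbin_weight p I S) \<le> card I / t\<^sup>2"
proof -
  let ?dev = "\<lambda>S. pbin_weight p I S * (card S - sum p I)\<^sup>2"
  have nonneg: "0 \<le> pbin_weight p I S" if "S \<subseteq> I" for S
    using pbin_weight_nonneg[OF p that] .
  have "(\<Sum>S\<in>T. pbin_weight p I S) \<le> (\<Sum>S\<in>T. ?dev S / t\<^sup>2)"
  proof (rule sum_mono)
    fix S assume "S \<in> T"
    then have "t\<^sup>2 \<le> (card S - sum p I)\<^sup>2"
      using far \<open>0 < t\<close> power_mono[of t "\<bar>card S - sum p I\<bar>" 2] by simp
    then have "pbin_weight p I S * t\<^sup>2 \<le> ?dev S"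
      using nonneg \<open>S \<in> T\<close> \<open>T \<subseteq> Pow I\<close> by (intro mult_left_mono) auto
    then show "pbin_weight p I S \<le> ?dev S / t\<^sup>2"
      using \<open>0 < t\<close> by (simp add: le_divide_eq)
  qed
  also have "\<dots> \<le> (\<Sum>S\<in>Pow I. ?dev S) / t\<^sup>2"
    unfolding sum_divide_distrib[symmetric] using \<open>finite I\<close> \<open>T \<subseteq> Pow I\<close> nonneg
    by (intro divide_right_mono sum_mono2) auto
  also have "\<dots> = (\<Sum>i\<in>I. p i * (1 - p i)) / t\<^sup>2"
    unfolding pbin_variance[OF \<open>finite I\<close>] ..
  also have "\<dots> \<le> (\<Sum>i\<in>I. 1) / t\<^sup>2"
    using p by (intro divide_right_mono sum_mono) (auto intro: mult_le_one)
  finally show ?thesis by simp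
qed

lemma sum_pbin_weight_bounds:
  assumes "finite I" "\<forall>i\<in>I. 0 \<le> p i \<and> p i \<le> 1" "T \<subseteq> Pow I"
  shows "(\<Sum>S\<in>T. pbin_weight p I S) \<in> {0..1}"
proof -
  have nonneg: "0 \<le> pbin_weight p I S" if "S \<in> Pow I" for S
    using pbin_weight_nonneg[OF assms(2)] that by simp
  then have "(\<Sum>S\<in>T. pbin_weight p I S) \<le> (\<Sum>S\<in>Pow I. pbin_weight p I S)"
    using assms(1,3) by (intro sum_mono2) auto
  moreover have "0 \<le> (\<Sum>S\<in>T. pbin_weight p I S)"
    using nonneg assms(3) by (intro sum_nonneg) auto
  ultimately show ?thesis
    using sum_pbin_weight[OF assms(1)] by simp
qed

lemma pbin_upper_tail:
  fixes p :: "'a \<Rightarrow> real"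
  assumes "finite I" "\<forall>i\<in>I. 0 \<le> p i \<and> p i \<le> 1" "0 < t" "sum p I + t \<le> c"
  shows "(\<Sum>S | S \<subseteq> I \<and> c \<le> real (card S). pbin_weight p I S) \<le> card I / t\<^sup>2"
  using assms by (intro pbin_chebyshev) auto

lemma pbin_lower_tail:
  fixes p :: "'a \<Rightarrow> real"
  assumes "finite I" "\<forall>i\<in>I. 0 \<le> p i \<and> p i \<le> 1" "0 < t" "c + t \<le> sum p I"
  shows "1 - card I / t\<^sup>2 \<le> (\<Sum>S | S \<subseteq> I \<and> c \<le> real (card S). pbin_weight p I S)"
proof -
  let ?T = "{S. S \<subseteq> I \<and> c \<le> real (card S)}"
  have "1 - (\<Sum>S\<in>?T. pbin_weight p I S) = (\<Sum>S\<in>Pow I - ?T. pbin_weight p I S)"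
    using assms(1) sum_pbin_weight[of I p] by (subst sum_diff) auto
  also have "\<dots> \<le> card I / t\<^sup>2"
    using assms by (intro pbin_chebyshev) auto
  finally show ?thesis by simp
qed

section \<open>Outcome probabilities and fidelity\<close>

lemma vote_A_prob_const:
  "(\<Sum>m\<in>{1..M}. Pm m w) = 1 \<Longrightarrow> vote_A_prob Pm M (\<lambda>_. c) w = c"
  unfolding vote_A_prob_def by (simp flip: sum_distrib_right)

lemma vote_A_prob_two_level:
  assumes "M \<ge> 1" "(\<Sum>m\<in>{1..M}. Pm m w) = 1"
  shows "vote_A_prob Pm M (\<lambda>m. if 2 \<le> m then x + y else x) w = x + y * (\<Sum>m\<in>{2..M}. Pm m w)"
proof -
  have split: "(\<Sum>m\<in>{1..M}. f m) = f 1 + (\<Sum>m\<in>{2..M}. f m)" for f :: "nat \<Rightarrow> real"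
  proof -
    have "{1..M} = insert 1 {2..M}"
      using assms(1) by auto
    then show ?thesis by simp
  qed
  have "vote_A_prob Pm M (\<lambda>m. if 2 \<le> m then x + y else x) w =
        x * (\<Sum>m\<in>{1..M}. Pm m w) + y * (\<Sum>m\<in>{2..M}. Pm m w)"
    unfolding vote_A_prob_def split[of "\<lambda>m. Pm m w"]
      split[of "\<lambda>m. Pm m w * (if 2 \<le> m then x + y else x)"]
    by (simp add: algebra_simps sum_distrib_left sum.distrib)
  then show ?thesis
    using assms(2) by simp
qed

lemma lambda_A_eq_pbin:
  "lambda_A Pm M \<mu> N \<Sigma> w =
     (\<Sum>S | S \<subseteq> {1..N} \<and> \<mu> * real N \<le> real (card S).
        pbin_weight (\<lambda>n. vote_A_prob Pm M (\<Sigma> n) w) {1..N} S)"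
  by (simp add: lambda_A_def pbin_weight_def)

lemma lambda_A_bounds:
  assumes "\<forall>n\<in>{1..N}. vote_A_prob Pm M (\<Sigma> n) w \<in> {0..1}"
  shows "lambda_A Pm M \<mu> N \<Sigma> w \<in> {0..1}"
  unfolding lambda_A_eq_pbin using assms by (intro sum_pbin_weight_bounds) auto

lemma lambda_R_near_1:
  assumes "\<forall>n\<in>{1..N}. vote_A_prob Pm M (\<Sigma> n) w \<in> {0..1}" "0 < t"
    and "(\<Sum>n\<in>{1..N}. vote_A_prob Pm M (\<Sigma> n) w) + t \<le> \<mu> * N"
  shows "lambda_R Pm M \<mu> N \<Sigma> w \<in> {1 - N / t\<^sup>2..1}"
  using pbin_upper_tail[of "{1..N}" "\<lambda>n. vote_A_prob Pm M (\<Sigma> n) w" t "\<mu> * N"]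
    lambda_A_bounds[OF assms(1)] assms
  unfolding lambda_R_def lambda_A_eq_pbin by auto

lemma lambda_A_near_1:
  assumes "\<forall>n\<in>{1..N}. vote_A_prob Pm M (\<Sigma> n) w \<in> {0..1}" "0 < t"
    and "\<mu> * N + t \<le> (\<Sum>n\<in>{1..N}. vote_A_prob Pm M (\<Sigma> n) w)"
  shows "lambda_A Pm M \<mu> N \<Sigma> w \<in> {1 - N / t\<^sup>2..1}"
  using pbin_lower_tail[of "{1..N}" "\<lambda>n. vote_A_prob Pm M (\<Sigma> n) w" t "\<mu> * N"]
    lambda_A_bounds[OF assms(1)] assms
  unfolding lambda_A_eq_pbin by auto

lemma informed_decision_near_1:
  assumes "0 < \<epsilon>" "N \<ge> 1" "2 \<le> \<epsilon> * N"
    and votes_01: "\<forall>w\<in>{1..W}. \<forall>n\<in>{1..N}. vote_A_prob Pm M (\<Sigma> n) w \<in> {0..1}"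
    and low: "\<forall>w\<in>low_states W \<mu> \<alpha>A. (\<Sum>n\<in>{1..N}. vote_A_prob Pm M (\<Sigma> n) w) \<le> (\<mu> - \<epsilon>) * N + 1"
    and high: "\<forall>w\<in>high_states W \<mu> \<alpha>A. (\<mu> + \<epsilon>) * N \<le> (\<Sum>n\<in>{1..N}. vote_A_prob Pm M (\<Sigma> n) w)"
  shows "(\<forall>w\<in>low_states W \<mu> \<alpha>A. lambda_R Pm M \<mu> N \<Sigma> w \<in> {1 - (4 / \<epsilon>\<^sup>2) / N..1}) \<and>
    (\<forall>w\<in>high_states W \<mu> \<alpha>A. lambda_A Pm M \<mu> N \<Sigma> w \<in> {1 - (4 / \<epsilon>\<^sup>2) / N..1})"
proof -
  \<comment> \<open>Chebyshev with deviation half the expected margin \<open>\<epsilon> N\<close>, which absorbs the rounding term 1.\<close>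
  define t where "t = \<epsilon> * N / 2"
  have "0 < t" and rate: "N / t\<^sup>2 = (4 / \<epsilon>\<^sup>2) / N"
    using assms(1-3) by (simp_all add: t_def power2_eq_square field_simps)
  show ?thesis
  proof (intro conjI ballI)
    fix w assume w: "w \<in> low_states W \<mu> \<alpha>A"
    then have "(\<Sum>n\<in>{1..N}. vote_A_prob Pm M (\<Sigma> n) w) + t \<le> \<mu> * N"
      using low assms(3) unfolding t_def by (auto simp: algebra_simps)
    moreover have "w \<in> {1..W}"
      using w by (simp add: low_states_def)
    ultimately have "lambda_R Pm M \<mu> N \<Sigma> w \<in> {1 - N / t\<^sup>2..1}"
      using votes_01 \<open>0 < t\<close> by (intro lambda_R_near_1) auto
    then show "lambda_R Pm M \<mu> N \<Sigma> w \<in> {1 - (4 / \<epsilon>\<^sup>2) / N..1}"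
      unfolding rate .
  next
    fix w assume w: "w \<in> high_states W \<mu> \<alpha>A"
    then have "\<mu> * N + t \<le> (\<Sum>n\<in>{1..N}. vote_A_prob Pm M (\<Sigma> n) w)"
      using high assms(3) unfolding t_def by (auto simp: algebra_simps)
    moreover have "w \<in> {1..W}"
      using w by (simp add: high_states_def)
    ultimately have "lambda_A Pm M \<mu> N \<Sigma> w \<in> {1 - N / t\<^sup>2..1}"
      using votes_01 \<open>0 < t\<close> by (intro lambda_A_near_1) auto
    then show "lambda_A Pm M \<mu> N \<Sigma> w \<in> {1 - (4 / \<epsilon>\<^sup>2) / N..1}"
      unfolding rate .
  qed
qed

lemma fidelity_bounds:
  assumes "\<forall>w\<in>{1..W}. 0 \<le> P w" "(\<Sum>w\<in>{1..W}. P w) = 1" "\<forall>w\<in>{1..W}. \<alpha>A w \<noteq> \<mu>"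
    and low: "\<forall>w\<in>low_states W \<mu> \<alpha>A. lambda_R Pm M \<mu> N \<Sigma> w \<in> {1 - e..1}"
    and high: "\<forall>w\<in>high_states W \<mu> \<alpha>A. lambda_A Pm M \<mu> N \<Sigma> w \<in> {1 - e..1}"
  shows "fidelity W P Pm M \<mu> \<alpha>A N \<Sigma> \<in> {1 - e..1}"
proof -
  let ?L = "low_states W \<mu> \<alpha>A" and ?H = "high_states W \<mu> \<alpha>A"
  have partition: "?L \<union> ?H = {1..W}" "?L \<inter> ?H = {}"
    using assms(3) unfolding low_states_def high_states_def by (auto simp: neq_iff)
  have "finite ?L" "finite ?H"
    unfolding low_states_def high_states_def by simp_all
  then have total: "(\<Sum>w\<in>?L. P w) + (\<Sum>w\<in>?H. P w) = 1"
    using assms(2) partition sum.union_disjoint[of ?L ?H P] by simp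
  have weighted: "P w * (1 - e) \<le> P w * r \<and> P w * r \<le> P w" if "w \<in> ?L \<union> ?H" "r \<in> {1 - e..1}"
    for w r
  proof -
    have "0 \<le> P w"
      using assms(1) partition(1) that(1) by blast
    then show ?thesis
      using that(2) mult_left_mono[of "1 - e" r "P w"] mult_left_le[of r "P w"] by simp
  qed
  have "(\<Sum>w\<in>?L. P w * (1 - e)) \<le> (\<Sum>w\<in>?L. P w * lambda_R Pm M \<mu> N \<Sigma> w)"
      "(\<Sum>w\<in>?L. P w * lambda_R Pm M \<mu> N \<Sigma> w) \<le> (\<Sum>w\<in>?L. P w)"
      "(\<Sum>w\<in>?H. P w * (1 - e)) \<le> (\<Sum>w\<in>?H. P w * lambda_A Pm M \<mu> N \<Sigma> w)"
      "(\<Sum>w\<in>?H. P w * lambda_A Pm M \<mu> N \<Sigma> w) \<le> (\<Sum>w\<in>?H. P w)"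
    by (rule sum_mono; use weighted low high in blast)+
  moreover have "(\<Sum>w\<in>?L. P w * (1 - e)) + (\<Sum>w\<in>?H. P w * (1 - e)) = 1 - e"
    by (simp only: sum_distrib_right[symmetric] distrib_right[symmetric] total) simp
  ultimately show ?thesis
    unfolding fidelity_def atLeastAtMost_iff using total by linarith
qed

lemma fidelity_tendsto_1:
  assumes "\<forall>w\<in>{1..W}. 0 \<le> P w" "(\<Sum>w\<in>{1..W}. P w) = 1" "\<forall>w\<in>{1..W}. \<alpha>A w \<noteq> \<mu>"
    and "\<forall>\<^sub>F N in sequentially.
          (\<forall>w\<in>low_states W \<mu> \<alpha>A. lambda_R Pm M \<mu> N (\<Sigma> N) w \<in> {1 - c / N..1}) \<and>
          (\<forall>w\<in>high_states W \<mu> \<alpha>A. lambda_A Pm M \<mu> N (\<Sigma> N) w \<in> {1 - c / N..1})"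
  shows "(\<lambda>N. fidelity W P Pm M \<mu> \<alpha>A N (\<Sigma> N)) \<longlonglongrightarrow> 1"
proof (rule tendsto_sandwich)
  have bounds: "\<forall>\<^sub>F N in sequentially. fidelity W P Pm M \<mu> \<alpha>A N (\<Sigma> N) \<in> {1 - c / N..1}"
    using assms(4) by eventually_elim (use assms(1-3) fidelity_bounds in blast)
  show "\<forall>\<^sub>F N in sequentially. 1 - c / real N \<le> fidelity W P Pm M \<mu> \<alpha>A N (\<Sigma> N)"
    "\<forall>\<^sub>F N in sequentially. fidelity W P Pm M \<mu> \<alpha>A N (\<Sigma> N) \<le> 1"
    using bounds by (auto elim: eventually_mono)
  show "(\<lambda>N. 1 - c / real N) \<longlonglongrightarrow> 1"
    using tendsto_diff[OF tendsto_const lim_const_over_n[of c]] by simp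
qed simp

definition contingent_profile ::
  "nat \<Rightarrow> real \<Rightarrow> (nat \<Rightarrow> real) \<Rightarrow> (nat \<Rightarrow> nat \<Rightarrow> outcome \<Rightarrow> nat) \<Rightarrow> (nat \<Rightarrow> real)
   \<Rightarrow> nat \<Rightarrow> nat \<Rightarrow> real" where
  "contingent_profile W \<mu> \<alpha>A u \<beta> n =
     (if friendly W \<mu> \<alpha>A u n then (\<lambda>_. 1) else if unfriendly W \<mu> \<alpha>A u n then (\<lambda>_. 0) else \<beta>)"

lemma regular_profile_contingent_profile:
  assumes "is_strategy M \<beta>" "\<forall>n\<in>{1..N}. \<not> (friendly W \<mu> \<alpha>A u n \<and> unfriendly W \<mu> \<alpha>A u n)"
  shows "regular_profile W M \<mu> \<alpha>A N u (contingent_profile W \<mu> \<alpha>A u \<beta>)"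
  using assms unfolding regular_profile_def contingent_profile_def is_strategy_def by auto

section \<open>Regular profiles separating the informed decisions\<close>

lemma le_if_floor_mult_le:
  fixes c d :: real
  assumes "\<And>N. N \<ge> 1 \<Longrightarrow> \<lfloor>c * real N\<rfloor> \<le> \<lfloor>d * real N\<rfloor>"
  shows "c \<le> d"
proof (rule ccontr)
  assume "\<not> c \<le> d"
  then obtain N :: nat where N: "1 / (c - d) < real N"
    using reals_Archimedean2 by blast
  moreover have "0 < 1 / (c - d)"
    using \<open>\<not> c \<le> d\<close> by simp
  ultimately have "0 < real N"
    by linarith
  then have "N \<ge> 1"
    by simp
  have "1 \<le> (c - d) * real N"
    using N \<open>\<not> c \<le> d\<close> by (simp add: divide_less_eq mult.commute)
  then have "\<lfloor>d * real N\<rfloor> + 1 \<le> \<lfloor>c * real N\<rfloor>"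
    using floor_mono[of "d * real N + 1" "c * real N"] by (simp add: algebra_simps)
  with assms[OF \<open>N \<ge> 1\<close>] show False by simp
qed

lemma two_level_separation:
  fixes g1 g2 \<theta> :: real
  assumes "0 \<le> g1" "g1 < g2" "g2 \<le> 1" "0 < \<theta>" "\<theta> < 1"
  obtains x y \<delta> where "0 \<le> x" "0 \<le> y" "x + y \<le> 1" "0 < \<delta>"
    "\<And>g. g \<le> g1 \<Longrightarrow> x + y * g \<le> \<theta> - \<delta>"
    "\<And>g. g2 \<le> g \<Longrightarrow> \<theta> + \<delta> \<le> x + y * g"
proof
  define y where "y = min \<theta> (1 - \<theta>)"
  have y: "0 < y" "y \<le> \<theta>" "y \<le> 1 - \<theta>"
    using assms unfolding y_def by auto
  have "0 \<le> y * (g1 + g2)" "y * (g1 + g2) \<le> y * 2"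
    using y assms by (auto intro: mult_left_mono)
  then show "0 \<le> \<theta> - y * (g1 + g2) / 2" "\<theta> - y * (g1 + g2) / 2 + y \<le> 1"
    using y by linarith+
  show "0 \<le> y" "0 < y * (g2 - g1) / 2"
    using y assms by simp_all
  show "\<theta> - y * (g1 + g2) / 2 + y * g \<le> \<theta> - y * (g2 - g1) / 2" if "g \<le> g1" for g
    using mult_left_mono[OF that less_imp_le[OF y(1)]] by (simp add: field_simps)
  show "\<theta> + y * (g2 - g1) / 2 \<le> \<theta> - y * (g1 + g2) / 2 + y * g" if "g2 \<le> g" for g
    using mult_left_mono[OF that less_imp_le[OF y(1)]] by (simp add: field_simps)
qed

text \<open>Of stochastic dominance only the case \<open>m = 2\<close> is needed: the probability of a signal above
  the lowest one increases with the state.\<close>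

locale voting_game =
  fixes W M :: nat and Pm :: "nat \<Rightarrow> nat \<Rightarrow> real" and \<mu> :: real and \<alpha>A :: "nat \<Rightarrow> real"
    and v :: "nat \<Rightarrow> nat \<Rightarrow> nat \<Rightarrow> outcome \<Rightarrow> nat"
  assumes M_ge_2: "M \<ge> 2"
    and signal_nonneg: "\<lbrakk>w \<in> {1..W}; m \<in> {1..M}\<rbrakk> \<Longrightarrow> 0 \<le> Pm m w"
    and signal_sum: "w \<in> {1..W} \<Longrightarrow> (\<Sum>m\<in>{1..M}. Pm m w) = 1"
    and high_signal_mono: "\<lbrakk>w1 \<in> {1..W}; w2 \<in> {1..W}; w1 < w2\<rbrakk> \<Longrightarrow>
        (\<Sum>m\<in>{2..M}. Pm m w1) < (\<Sum>m\<in>{2..M}. Pm m w2)"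
    and low_states_nonempty: "low_states W \<mu> \<alpha>A \<noteq> {}"
    and high_states_nonempty: "high_states W \<mu> \<alpha>A \<noteq> {}"
    and utility_Acc_mono: "\<lbrakk>n \<in> {1..N}; w1 \<in> {1..W}; w2 \<in> {1..W}; w1 < w2\<rbrakk> \<Longrightarrow>
        v N n w1 Acc < v N n w2 Acc"
    and utility_Rej_antimono: "\<lbrakk>n \<in> {1..N}; w1 \<in> {1..W}; w2 \<in> {1..W}; w1 < w2\<rbrakk> \<Longrightarrow>
        v N n w2 Rej < v N n w1 Rej"
    and utility_ne: "\<lbrakk>n \<in> {1..N}; w \<in> {1..W}\<rbrakk> \<Longrightarrow> v N n w Acc \<noteq> v N n w Rej"
    and card_prefer_Rej: "\<lbrakk>N \<ge> 1; w \<in> {1..W}\<rbrakk> \<Longrightarrow>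
        int (card {n\<in>{1..N}. v N n w Acc < v N n w Rej}) = \<lfloor>(1 - \<alpha>A w) * real N\<rfloor>"
begin

lemma prefers_Acc_upward:
  assumes "n \<in> {1..N}" "w1 \<in> {1..W}" "w2 \<in> {1..W}" "w1 \<le> w2"
    and "v N n w1 Rej < v N n w1 Acc"
  shows "v N n w2 Rej < v N n w2 Acc"
proof (cases "w1 = w2")
  case False
  then show ?thesis
    using assms utility_Acc_mono[of n N w1 w2] utility_Rej_antimono[of n N w1 w2] by simp
qed (use assms in simp)

lemma prefers_Rej_downward:
  assumes "n \<in> {1..N}" "w1 \<in> {1..W}" "w2 \<in> {1..W}" "w1 \<le> w2"
    and "v N n w2 Acc < v N n w2 Rej"
  shows "v N n w1 Acc < v N n w1 Rej"
proof (cases "w1 = w2")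
  case False
  then show ?thesis
    using assms utility_Acc_mono[of n N w1 w2] utility_Rej_antimono[of n N w1 w2] by simp
qed (use assms in simp)

lemma alpha_mono:
  assumes "w1 \<in> {1..W}" "w2 \<in> {1..W}" "w1 \<le> w2"
  shows "\<alpha>A w1 \<le> \<alpha>A w2"
proof -
  have "\<lfloor>(1 - \<alpha>A w2) * real N\<rfloor> \<le> \<lfloor>(1 - \<alpha>A w1) * real N\<rfloor>" if "N \<ge> 1" for N
  proof -
    have "{n\<in>{1..N}. v N n w2 Acc < v N n w2 Rej} \<subseteq> {n\<in>{1..N}. v N n w1 Acc < v N n w1 Rej}"
      using prefers_Rej_downward[OF _ assms] by blast
    then have "card {n\<in>{1..N}. v N n w2 Acc < v N n w2 Rej} \<le>
               card {n\<in>{1..N}. v N n w1 Acc < v N n w1 Rej}"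
      by (intro card_mono) auto
    then show ?thesis
      using card_prefer_Rej[OF that assms(1)] card_prefer_Rej[OF that assms(2)] by linarith
  qed
  then show ?thesis
    using le_if_floor_mult_le[of "1 - \<alpha>A w2" "1 - \<alpha>A w1"] by simp
qed

definition top_low :: nat where
  "top_low = Max (low_states W \<mu> \<alpha>A)"

definition bottom_high :: nat where
  "bottom_high = Min (high_states W \<mu> \<alpha>A)"

lemma top_low: "top_low \<in> {1..W}" "\<alpha>A top_low < \<mu>"
proof -
  have "top_low \<in> low_states W \<mu> \<alpha>A"
    unfolding top_low_def using low_states_nonempty
    by (intro Max_in) (simp_all add: low_states_def)
  then show "top_low \<in> {1..W}" "\<alpha>A top_low < \<mu>"
    by (simp_all add: low_states_def)
qed

lemma bottom_high: "bottom_high \<in> {1..W}" "\<mu> < \<alpha>A bottom_high"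
proof -
  have "bottom_high \<in> high_states W \<mu> \<alpha>A"
    unfolding bottom_high_def using high_states_nonempty
    by (intro Min_in) (simp_all add: high_states_def)
  then show "bottom_high \<in> {1..W}" "\<mu> < \<alpha>A bottom_high"
    by (simp_all add: high_states_def)
qed

lemma low_states_iff: "w \<in> low_states W \<mu> \<alpha>A \<longleftrightarrow> w \<in> {1..W} \<and> w \<le> top_low"
proof
  assume "w \<in> low_states W \<mu> \<alpha>A"
  then show "w \<in> {1..W} \<and> w \<le> top_low"
    unfolding top_low_def by (simp add: low_states_def)
next
  assume "w \<in> {1..W} \<and> w \<le> top_low"
  then show "w \<in> low_states W \<mu> \<alpha>A"
    using alpha_mono[of w top_low] top_low by (auto simp: low_states_def)
qed

lemma high_states_iff: "w \<in> high_states W \<mu> \<alpha>A \<longleftrightarrow> w \<in> {1..W} \<and> bottom_high \<le> w"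
proof
  assume "w \<in> high_states W \<mu> \<alpha>A"
  then show "w \<in> {1..W} \<and> bottom_high \<le> w"
    unfolding bottom_high_def by (simp add: high_states_def)
next
  assume "w \<in> {1..W} \<and> bottom_high \<le> w"
  then show "w \<in> high_states W \<mu> \<alpha>A"
    using alpha_mono[of bottom_high w] bottom_high by (auto simp: high_states_def)
qed

lemma top_low_less_bottom_high: "top_low < bottom_high"
  using high_states_iff[of top_low] top_low bottom_high
  by (auto simp: high_states_def)

lemma friendly_iff:
  assumes "n \<in> {1..N}"
  shows "friendly W \<mu> \<alpha>A (v N) n \<longleftrightarrow> v N n top_low Rej < v N n top_low Acc"
proof
  assume "friendly W \<mu> \<alpha>A (v N) n"
  then obtain w where "w \<in> low_states W \<mu> \<alpha>A" "v N n w Rej < v N n w Acc"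
    unfolding friendly_def by blast
  then show "v N n top_low Rej < v N n top_low Acc"
    using prefers_Acc_upward[OF assms _ top_low(1)] low_states_iff by blast
next
  assume "v N n top_low Rej < v N n top_low Acc"
  then show "friendly W \<mu> \<alpha>A (v N) n"
    unfolding friendly_def using low_states_iff top_low(1) by blast
qed

lemma unfriendly_iff:
  assumes "n \<in> {1..N}"
  shows "unfriendly W \<mu> \<alpha>A (v N) n \<longleftrightarrow> v N n bottom_high Acc < v N n bottom_high Rej"
proof
  assume "unfriendly W \<mu> \<alpha>A (v N) n"
  then obtain w where "w \<in> high_states W \<mu> \<alpha>A" "v N n w Acc < v N n w Rej"
    unfolding unfriendly_def by blast
  then show "v N n bottom_high Acc < v N n bottom_high Rej"
    using prefers_Rej_downward[OF assms bottom_high(1)] high_states_iff by blast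
next
  assume "v N n bottom_high Acc < v N n bottom_high Rej"
  then show "unfriendly W \<mu> \<alpha>A (v N) n"
    unfolding unfriendly_def using high_states_iff bottom_high(1) by blast
qed

lemma not_friendly_and_unfriendly:
  assumes "n \<in> {1..N}"
  shows "\<not> (friendly W \<mu> \<alpha>A (v N) n \<and> unfriendly W \<mu> \<alpha>A (v N) n)"
  using friendly_iff[OF assms] unfriendly_iff[OF assms] top_low_less_bottom_high
    prefers_Acc_upward[OF assms top_low(1) bottom_high(1)] by auto

lemma card_not_prefer_Rej:
  assumes "N \<ge> 1" "w \<in> {1..W}"
  shows "\<alpha>A w * N \<le> card {n\<in>{1..N}. \<not> v N n w Acc < v N n w Rej}"
    and "card {n\<in>{1..N}. \<not> v N n w Acc < v N n w Rej} \<le> \<alpha>A w * N + 1"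
proof -
  let ?R = "{n\<in>{1..N}. v N n w Acc < v N n w Rej}"
    and ?notR = "{n\<in>{1..N}. \<not> v N n w Acc < v N n w Rej}"
  have "card ?notR + card ?R = card (?notR \<union> ?R)"
    by (intro card_Un_disjoint[symmetric]) auto
  also have "?notR \<union> ?R = {1..N}"
    by auto
  moreover have "real (card ?R) = \<lfloor>(1 - \<alpha>A w) * real N\<rfloor>"
    using arg_cong[OF card_prefer_Rej[OF assms], of real_of_int] by simp
  ultimately show "\<alpha>A w * N \<le> card ?notR" "card ?notR \<le> \<alpha>A w * N + 1"
    using of_int_floor_le[of "(1 - \<alpha>A w) * real N"]
      real_of_int_floor_gt_diff_one[of "(1 - \<alpha>A w) * real N"]
    by (simp_all add: algebra_simps)
qed

lemma vote_A_prob_contingent_profile: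
  assumes "n \<in> {1..N}" "w \<in> {1..W}"
  shows "vote_A_prob Pm M (contingent_profile W \<mu> \<alpha>A (v N) \<beta> n) w =
    of_bool (friendly W \<mu> \<alpha>A (v N) n) * (1 - vote_A_prob Pm M \<beta> w) +
    of_bool (\<not> unfriendly W \<mu> \<alpha>A (v N) n) * vote_A_prob Pm M \<beta> w"
  using not_friendly_and_unfriendly[OF assms(1)]
    vote_A_prob_const[where Pm = Pm and M = M and w = w, OF signal_sum[OF assms(2)]]
  unfolding contingent_profile_def by auto

lemma expected_Acc_votes:
  assumes "N \<ge> 1" "w \<in> {1..W}" "vote_A_prob Pm M \<beta> w \<in> {0..1}"
  defines "q \<equiv> vote_A_prob Pm M \<beta> w"
  shows "N * (\<alpha>A top_low + (\<alpha>A bottom_high - \<alpha>A top_low) * q) \<le>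
           (\<Sum>n\<in>{1..N}. vote_A_prob Pm M (contingent_profile W \<mu> \<alpha>A (v N) \<beta> n) w)"
    and "(\<Sum>n\<in>{1..N}. vote_A_prob Pm M (contingent_profile W \<mu> \<alpha>A (v N) \<beta> n) w) \<le>
           N * (\<alpha>A top_low + (\<alpha>A bottom_high - \<alpha>A top_low) * q) + 1"
proof -
  define F where "F = real (card {n\<in>{1..N}. \<not> v N n top_low Acc < v N n top_low Rej})"
  define U where "U = real (card {n\<in>{1..N}. \<not> v N n bottom_high Acc < v N n bottom_high Rej})"
  have "friendly W \<mu> \<alpha>A (v N) n \<longleftrightarrow> \<not> v N n top_low Acc < v N n top_low Rej"
    if "n \<in> {1..N}" for n
    using friendly_iff[OF that] utility_ne[OF that top_low(1)] by auto
  then have "{n\<in>{1..N}. friendly W \<mu> \<alpha>A (v N) n} =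
             {n\<in>{1..N}. \<not> v N n top_low Acc < v N n top_low Rej}"
    by auto
  moreover have "{n\<in>{1..N}. \<not> unfriendly W \<mu> \<alpha>A (v N) n} =
                 {n\<in>{1..N}. \<not> v N n bottom_high Acc < v N n bottom_high Rej}"
    using unfriendly_iff by auto
  \<comment> \<open>\<open>F\<close> agents vote A surely and the \<open>U - F\<close> contingent ones with probability \<open>q\<close>.\<close>
  ultimately have votes: "(\<Sum>n\<in>{1..N}. vote_A_prob Pm M (contingent_profile W \<mu> \<alpha>A (v N) \<beta> n) w)
      = F * (1 - q) + U * q"
    unfolding F_def U_def q_def using vote_A_prob_contingent_profile[OF _ assms(2)]
    by (simp add: sum.distrib sum_distrib_right[symmetric] Int_def conj_commute)
  have "\<alpha>A top_low * N * (1 - q) \<le> F * (1 - q)" "F * (1 - q) \<le> (\<alpha>A top_low * N + 1) * (1 - q)"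
       "\<alpha>A bottom_high * N * q \<le> U * q" "U * q \<le> (\<alpha>A bottom_high * N + 1) * q"
    using card_not_prefer_Rej[OF assms(1) top_low(1)]
      card_not_prefer_Rej[OF assms(1) bottom_high(1)] assms(3)
    unfolding F_def U_def q_def by (auto intro: mult_right_mono)
  then show "N * (\<alpha>A top_low + (\<alpha>A bottom_high - \<alpha>A top_low) * q) \<le>
           (\<Sum>n\<in>{1..N}. vote_A_prob Pm M (contingent_profile W \<mu> \<alpha>A (v N) \<beta> n) w)"
    and "(\<Sum>n\<in>{1..N}. vote_A_prob Pm M (contingent_profile W \<mu> \<alpha>A (v N) \<beta> n) w) \<le>
           N * (\<alpha>A top_low + (\<alpha>A bottom_high - \<alpha>A top_low) * q) + 1"
    unfolding votes by (simp_all add: algebra_simps)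
qed

definition high_signal_prob :: "nat \<Rightarrow> real" where
  "high_signal_prob w = (\<Sum>m\<in>{2..M}. Pm m w)"

lemma high_signal_prob_bounds:
  assumes "w \<in> {1..W}"
  shows "0 \<le> high_signal_prob w" "high_signal_prob w \<le> 1"
proof -
  show "0 \<le> high_signal_prob w"
    unfolding high_signal_prob_def using signal_nonneg[OF assms] by (intro sum_nonneg) auto
  have "high_signal_prob w \<le> (\<Sum>m\<in>{1..M}. Pm m w)"
    unfolding high_signal_prob_def using signal_nonneg[OF assms] by (intro sum_mono2) auto
  then show "high_signal_prob w \<le> 1"
    using signal_sum[OF assms] by simp
qed

lemma high_signal_prob_mono:
  assumes "w1 \<in> {1..W}" "w2 \<in> {1..W}" "w1 \<le> w2"
  shows "high_signal_prob w1 \<le> high_signal_prob w2"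
  using high_signal_mono[OF assms(1,2)] assms(3) unfolding high_signal_prob_def
  by (cases "w1 = w2") auto

lemma threshold_strategy:
  assumes "0 < \<theta>" "\<theta> < 1"
  obtains \<beta> \<delta> where "is_strategy M \<beta>" "0 < \<delta>"
    "\<And>w. w \<in> {1..W} \<Longrightarrow> vote_A_prob Pm M \<beta> w \<in> {0..1}"
    "\<And>w. w \<in> low_states W \<mu> \<alpha>A \<Longrightarrow> vote_A_prob Pm M \<beta> w \<le> \<theta> - \<delta>"
    "\<And>w. w \<in> high_states W \<mu> \<alpha>A \<Longrightarrow> \<theta> + \<delta> \<le> vote_A_prob Pm M \<beta> w"
proof -
  have "high_signal_prob top_low < high_signal_prob bottom_high"
    unfolding high_signal_prob_def
    using high_signal_mono top_low(1) bottom_high(1) top_low_less_bottom_high .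
  then obtain x y \<delta> where xy: "0 \<le> x" "0 \<le> y" "x + y \<le> 1" "0 < \<delta>"
    and below: "\<And>g. g \<le> high_signal_prob top_low \<Longrightarrow> x + y * g \<le> \<theta> - \<delta>"
    and above: "\<And>g. high_signal_prob bottom_high \<le> g \<Longrightarrow> \<theta> + \<delta> \<le> x + y * g"
    using two_level_separation[of "high_signal_prob top_low" "high_signal_prob bottom_high" \<theta>]
      high_signal_prob_bounds top_low(1) bottom_high(1) assms
    by blast
  define \<beta> where "\<beta> m = (if 2 \<le> m then x + y else x)" for m :: nat
  have vote: "vote_A_prob Pm M \<beta> w = x + y * high_signal_prob w" if "w \<in> {1..W}" for w
    unfolding \<beta>_def high_signal_prob_def using M_ge_2 signal_sum[OF that]
    by (intro vote_A_prob_two_level) auto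
  show ?thesis
  proof (rule that[of \<beta> \<delta>])
    show "is_strategy M \<beta>"
      using xy unfolding is_strategy_def \<beta>_def by auto
    show "vote_A_prob Pm M \<beta> w \<in> {0..1}" if "w \<in> {1..W}" for w
      using vote[OF that] high_signal_prob_bounds[OF that] xy mult_left_le[of "high_signal_prob w" y]
      by auto
    show "vote_A_prob Pm M \<beta> w \<le> \<theta> - \<delta>" if "w \<in> low_states W \<mu> \<alpha>A" for w
      using that low_states_iff vote below high_signal_prob_mono top_low(1) by simp
    show "\<theta> + \<delta> \<le> vote_A_prob Pm M \<beta> w" if "w \<in> high_states W \<mu> \<alpha>A" for w
      using that high_states_iff vote above high_signal_prob_mono bottom_high(1) by simp
  qed (rule xy(4))
qed

lemma separating_strategy:
  obtains \<beta> \<epsilon> where "is_strategy M \<beta>" "0 < \<epsilon>"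
    "\<And>w. w \<in> {1..W} \<Longrightarrow> vote_A_prob Pm M \<beta> w \<in> {0..1}"
    "\<And>w. w \<in> low_states W \<mu> \<alpha>A \<Longrightarrow>
       \<alpha>A top_low + (\<alpha>A bottom_high - \<alpha>A top_low) * vote_A_prob Pm M \<beta> w \<le> \<mu> - \<epsilon>"
    "\<And>w. w \<in> high_states W \<mu> \<alpha>A \<Longrightarrow>
       \<mu> + \<epsilon> \<le> \<alpha>A top_low + (\<alpha>A bottom_high - \<alpha>A top_low) * vote_A_prob Pm M \<beta> w"
proof -
  let ?a = "\<alpha>A top_low" and ?b = "\<alpha>A bottom_high"
  have ab: "?a < \<mu>" "\<mu> < ?b"
    using top_low bottom_high by simp_all
  \<comment> \<open>Contingent agents, a fraction \<open>b - a\<close> of all agents, must supply the share \<open>\<theta>\<close> of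
    their votes to lift the fraction \<open>a\<close> of friendly votes to the threshold \<open>\<mu>\<close>.\<close>
  define \<theta> where "\<theta> = (\<mu> - ?a) / (?b - ?a)"
  have \<theta>: "0 < \<theta>" "\<theta> < 1" "?a + (?b - ?a) * \<theta> = \<mu>"
    using ab by (simp_all add: \<theta>_def field_simps)
  obtain \<beta> \<delta> where \<beta>: "is_strategy M \<beta>" "0 < \<delta>"
    "\<And>w. w \<in> {1..W} \<Longrightarrow> vote_A_prob Pm M \<beta> w \<in> {0..1}"
    and low: "\<And>w. w \<in> low_states W \<mu> \<alpha>A \<Longrightarrow> vote_A_prob Pm M \<beta> w \<le> \<theta> - \<delta>"
    and high: "\<And>w. w \<in> high_states W \<mu> \<alpha>A \<Longrightarrow> \<theta> + \<delta> \<le> vote_A_prob Pm M \<beta> w"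
    using threshold_strategy[OF \<theta>(1,2)] by blast
  show ?thesis
  proof (rule that[of \<beta> "(?b - ?a) * \<delta>"])
    show "0 < (?b - ?a) * \<delta>"
      using ab \<beta>(2) by simp
    show "?a + (?b - ?a) * vote_A_prob Pm M \<beta> w \<le> \<mu> - (?b - ?a) * \<delta>"
      if "w \<in> low_states W \<mu> \<alpha>A" for w
      using mult_left_mono[OF low[OF that], of "?b - ?a"] ab \<theta>(3) by (simp add: algebra_simps)
    show "\<mu> + (?b - ?a) * \<delta> \<le> ?a + (?b - ?a) * vote_A_prob Pm M \<beta> w"
      if "w \<in> high_states W \<mu> \<alpha>A" for w
      using mult_left_mono[OF high[OF that], of "?b - ?a"] ab \<theta>(3) by (simp add: algebra_simps)
  qed (use \<beta> in auto)
qed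

lemma contingent_profile_separates:
  obtains \<beta> \<epsilon> where "is_strategy M \<beta>" "0 < \<epsilon>"
    "\<And>N w n. \<lbrakk>n \<in> {1..N}; w \<in> {1..W}\<rbrakk> \<Longrightarrow>
       vote_A_prob Pm M (contingent_profile W \<mu> \<alpha>A (v N) \<beta> n) w \<in> {0..1}"
    "\<And>N w. \<lbrakk>N \<ge> 1; w \<in> low_states W \<mu> \<alpha>A\<rbrakk> \<Longrightarrow>
       (\<Sum>n\<in>{1..N}. vote_A_prob Pm M (contingent_profile W \<mu> \<alpha>A (v N) \<beta> n) w) \<le> (\<mu> - \<epsilon>) * N + 1"
    "\<And>N w. \<lbrakk>N \<ge> 1; w \<in> high_states W \<mu> \<alpha>A\<rbrakk> \<Longrightarrow>
       (\<mu> + \<epsilon>) * N \<le> (\<Sum>n\<in>{1..N}. vote_A_prob Pm M (contingent_profile W \<mu> \<alpha>A (v N) \<beta> n) w)"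
proof -
  obtain \<beta> \<epsilon> where \<beta>: "is_strategy M \<beta>" "0 < \<epsilon>"
    and q: "\<And>w. w \<in> {1..W} \<Longrightarrow> vote_A_prob Pm M \<beta> w \<in> {0..1}"
    and low: "\<And>w. w \<in> low_states W \<mu> \<alpha>A \<Longrightarrow>
       \<alpha>A top_low + (\<alpha>A bottom_high - \<alpha>A top_low) * vote_A_prob Pm M \<beta> w \<le> \<mu> - \<epsilon>"
    and high: "\<And>w. w \<in> high_states W \<mu> \<alpha>A \<Longrightarrow>
       \<mu> + \<epsilon> \<le> \<alpha>A top_low + (\<alpha>A bottom_high - \<alpha>A top_low) * vote_A_prob Pm M \<beta> w"
    using separating_strategy by blast
  show ?thesis
  proof (rule that[OF \<beta>])
    show "vote_A_prob Pm M (contingent_profile W \<mu> \<alpha>A (v N) \<beta> n) w \<in> {0..1}"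
      if "n \<in> {1..N}" "w \<in> {1..W}" for N w n
      using vote_A_prob_contingent_profile[OF that] q[OF that(2)] by (auto simp: of_bool_def)
    show "(\<Sum>n\<in>{1..N}. vote_A_prob Pm M (contingent_profile W \<mu> \<alpha>A (v N) \<beta> n) w) \<le> (\<mu> - \<epsilon>) * N + 1"
      if "N \<ge> 1" "w \<in> low_states W \<mu> \<alpha>A" for N w
    proof -
      have "w \<in> {1..W}"
        using that(2) by (simp add: low_states_def)
      then have "(\<Sum>n\<in>{1..N}. vote_A_prob Pm M (contingent_profile W \<mu> \<alpha>A (v N) \<beta> n) w) \<le>
          N * (\<alpha>A top_low + (\<alpha>A bottom_high - \<alpha>A top_low) * vote_A_prob Pm M \<beta> w) + 1"
        using expected_Acc_votes(2)[OF that(1)] q by blast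
      also have "\<dots> \<le> N * (\<mu> - \<epsilon>) + 1"
        using mult_left_mono[OF low[OF that(2)], of N] by simp
      finally show ?thesis
        by (simp add: mult.commute)
    qed
    show "(\<mu> + \<epsilon>) * N \<le> (\<Sum>n\<in>{1..N}. vote_A_prob Pm M (contingent_profile W \<mu> \<alpha>A (v N) \<beta> n) w)"
      if "N \<ge> 1" "w \<in> high_states W \<mu> \<alpha>A" for N w
    proof -
      have "w \<in> {1..W}"
        using that(2) by (simp add: high_states_def)
      have "N * (\<mu> + \<epsilon>) \<le>
          N * (\<alpha>A top_low + (\<alpha>A bottom_high - \<alpha>A top_low) * vote_A_prob Pm M \<beta> w)"
        using mult_left_mono[OF high[OF that(2)], of N] by simp
      also have "\<dots> \<le> (\<Sum>n\<in>{1..N}. vote_A_prob Pm M (contingent_profile W \<mu> \<alpha>A (v N) \<beta> n) w)"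
        using expected_Acc_votes(1)[OF that(1)] q \<open>w \<in> {1..W}\<close> by blast
      finally show ?thesis
        by (simp add: mult.commute)
    qed
  qed
qed

theorem informed_decision_with_high_probability:
  obtains \<Sigma> c where "\<forall>N\<ge>1. regular_profile W M \<mu> \<alpha>A N (v N) (\<Sigma> N)"
    "\<forall>\<^sub>F N in sequentially.
       (\<forall>w\<in>low_states W \<mu> \<alpha>A. lambda_R Pm M \<mu> N (\<Sigma> N) w \<in> {1 - c / N..1}) \<and>
       (\<forall>w\<in>high_states W \<mu> \<alpha>A. lambda_A Pm M \<mu> N (\<Sigma> N) w \<in> {1 - c / N..1})"
proof -
  obtain \<beta> \<epsilon> where \<beta>: "is_strategy M \<beta>" and "0 < \<epsilon>"
    and votes_01: "\<And>N w n. \<lbrakk>n \<in> {1..N}; w \<in> {1..W}\<rbrakk> \<Longrightarrow>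
       vote_A_prob Pm M (contingent_profile W \<mu> \<alpha>A (v N) \<beta> n) w \<in> {0..1}"
    and low: "\<And>N w. \<lbrakk>N \<ge> 1; w \<in> low_states W \<mu> \<alpha>A\<rbrakk> \<Longrightarrow>
       (\<Sum>n\<in>{1..N}. vote_A_prob Pm M (contingent_profile W \<mu> \<alpha>A (v N) \<beta> n) w) \<le> (\<mu> - \<epsilon>) * N + 1"
    and high: "\<And>N w. \<lbrakk>N \<ge> 1; w \<in> high_states W \<mu> \<alpha>A\<rbrakk> \<Longrightarrow>
       (\<mu> + \<epsilon>) * N \<le> (\<Sum>n\<in>{1..N}. vote_A_prob Pm M (contingent_profile W \<mu> \<alpha>A (v N) \<beta> n) w)"
    using contingent_profile_separates by blast
  define \<Sigma> where "\<Sigma> N = contingent_profile W \<mu> \<alpha>A (v N) \<beta>" for N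
  have "\<forall>N\<ge>1. regular_profile W M \<mu> \<alpha>A N (v N) (\<Sigma> N)"
    unfolding \<Sigma>_def using \<beta> not_friendly_and_unfriendly regular_profile_contingent_profile by blast
  moreover have "\<forall>\<^sub>F N in sequentially. N \<ge> 1 \<and> 2 \<le> \<epsilon> * N"
  proof -
    have "filterlim (\<lambda>N. \<epsilon> * real N) at_top sequentially"
      using \<open>0 < \<epsilon>\<close> by (intro filterlim_tendsto_pos_mult_at_top filterlim_real_sequentially) auto
    then show ?thesis
      unfolding filterlim_at_top using eventually_ge_at_top[of 1] by (auto intro: eventually_conj)
  qed
  then have "\<forall>\<^sub>F N in sequentially.
      (\<forall>w\<in>low_states W \<mu> \<alpha>A. lambda_R Pm M \<mu> N (\<Sigma> N) w \<in> {1 - (4 / \<epsilon>\<^sup>2) / N..1}) \<and>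
      (\<forall>w\<in>high_states W \<mu> \<alpha>A. lambda_A Pm M \<mu> N (\<Sigma> N) w \<in> {1 - (4 / \<epsilon>\<^sup>2) / N..1})"
  proof (rule eventually_mono)
    fix N :: nat
    assume "N \<ge> 1 \<and> 2 \<le> \<epsilon> * N"
    then show "(\<forall>w\<in>low_states W \<mu> \<alpha>A. lambda_R Pm M \<mu> N (\<Sigma> N) w \<in> {1 - (4 / \<epsilon>\<^sup>2) / N..1}) \<and>
      (\<forall>w\<in>high_states W \<mu> \<alpha>A. lambda_A Pm M \<mu> N (\<Sigma> N) w \<in> {1 - (4 / \<epsilon>\<^sup>2) / N..1})"
      unfolding \<Sigma>_def using \<open>0 < \<epsilon>\<close> votes_01 low high by (intro informed_decision_near_1) auto
  qed
  ultimately show ?thesis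
    by (rule that)
qed

end

theorem theorem6:
  fixes W M :: nat and P :: "nat \<Rightarrow> real" and Pm :: "nat \<Rightarrow> nat \<Rightarrow> real"
    and \<mu> :: real and \<alpha>A :: "nat \<Rightarrow> real"
    and v :: "nat \<Rightarrow> nat \<Rightarrow> nat \<Rightarrow> outcome \<Rightarrow> nat"
  assumes prior_pos: "\<forall>w\<in>{1..W}. P w > 0"
    and prior_sum: "(\<Sum>w\<in>{1..W}. P w) = 1"
    and M_ge: "M \<ge> 2"
    and sig_nonneg: "\<forall>w\<in>{1..W}. \<forall>m\<in>{1..M}. Pm m w \<ge> 0"
    and sig_sum: "\<forall>w\<in>{1..W}. (\<Sum>m\<in>{1..M}. Pm m w) = 1"
    and dominance: "\<forall>w1\<in>{1..W}. \<forall>w2\<in>{1..W}. w1 > w2 \<longrightarrow>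
        (\<forall>m\<in>{2..M}. (\<Sum>k\<in>{m..M}. Pm k w1) > (\<Sum>k\<in>{m..M}. Pm k w2))"
    and mu: "0 < \<mu>" "\<mu> < 1"
    and alpha_range: "\<forall>w\<in>{1..W}. 0 \<le> \<alpha>A w \<and> \<alpha>A w \<le> 1"
    and alpha_ne: "\<forall>w\<in>{1..W}. \<alpha>A w \<noteq> \<mu>"
    and L_ne: "low_states W \<mu> \<alpha>A \<noteq> {}"
    and H_ne: "high_states W \<mu> \<alpha>A \<noteq> {}"
    and v_A_mono: "\<forall>N n w1 w2. n \<in> {1..N} \<longrightarrow> w1 \<in> {1..W} \<longrightarrow> w2 \<in> {1..W} \<longrightarrow> w1 < w2
        \<longrightarrow> v N n w1 Acc < v N n w2 Acc"
    and v_R_mono: "\<forall>N n w1 w2. n \<in> {1..N} \<longrightarrow> w1 \<in> {1..W} \<longrightarrow> w2 \<in> {1..W} \<longrightarrow> w1 < w2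
        \<longrightarrow> v N n w1 Rej > v N n w2 Rej"
    and v_ne: "\<forall>N n w. n \<in> {1..N} \<longrightarrow> w \<in> {1..W} \<longrightarrow> v N n w Acc \<noteq> v N n w Rej"
    and count_R: "\<forall>N\<ge>1. \<forall>w\<in>{1..W}.
        int (card {n\<in>{1..N}. v N n w Rej > v N n w Acc}) = \<lfloor>(1 - \<alpha>A w) * real N\<rfloor>"
    and no_flip: "\<forall>N\<ge>1. \<forall>w\<in>{1..W}.
        (\<mu> * real N \<le> real N - of_int \<lfloor>(1 - \<alpha>A w) * real N\<rfloor>) \<longleftrightarrow> \<alpha>A w > \<mu>"
  shows "\<exists>\<Sigma> :: nat \<Rightarrow> nat \<Rightarrow> nat \<Rightarrow> real.
           (\<forall>N\<ge>1. regular_profile W M \<mu> \<alpha>A N (v N) (\<Sigma> N)) \<and>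
           (\<lambda>N. fidelity W P Pm M \<mu> \<alpha>A N (\<Sigma> N)) \<longlonglongrightarrow> 1"
proof -
  interpret voting_game W M Pm \<mu> \<alpha>A v
    using M_ge sig_nonneg sig_sum dominance L_ne H_ne v_A_mono v_R_mono v_ne count_R
    by unfold_locales auto
  obtain \<Sigma> c where regular: "\<forall>N\<ge>1. regular_profile W M \<mu> \<alpha>A N (v N) (\<Sigma> N)"
    and informed: "\<forall>\<^sub>F N in sequentially.
       (\<forall>w\<in>low_states W \<mu> \<alpha>A. lambda_R Pm M \<mu> N (\<Sigma> N) w \<in> {1 - c / N..1}) \<and>
       (\<forall>w\<in>high_states W \<mu> \<alpha>A. lambda_A Pm M \<mu> N (\<Sigma> N) w \<in> {1 - c / N..1})"
    using informed_decision_with_high_probability by blast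
  have "(\<lambda>N. fidelity W P Pm M \<mu> \<alpha>A N (\<Sigma> N)) \<longlonglongrightarrow> 1"
    using prior_pos prior_sum alpha_ne informed
    by (intro fidelity_tendsto_1) (auto simp: less_imp_le)
  with regular show ?thesis
    by blast
qed

end
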